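(* Let $H$ be a complex Hilbert space and $\{\mathcal{U}(t,s)\}_{t,s\in\mathbb{R}}$ a strongly continuous family of bounded linear operators on $H$ with $\mathcal{U}(t,t)=1$ and $\mathcal{U}(r,s)\mathcal{U}(t,r)=\mathcal{U}(t,s)$ for all $r,s,t\in\mathbb{R}$. For $t\in\mathbb{R}$ let $\mathcal{L}(t)x:=\lim_{h\to0}\frac1h[\mathcal{U}(t+h,t)x-x]$ on $D(\mathcal{L}(t)):=\{x:\text{the limit exists in }H\}$, and $D_\mathcal{L}:=\bigcap_{t}D(\mathcal{L}(t))$. Fix $t_0\in\mathbb{R}$ and $z\in D_\mathcal{L}$ with $z\neq0$ such that $t\mapsto\mathcal{U}(t,t_0)\mathcal{L}(t)z$ is continuous. Define $(x,y)_t:=(\mathcal{U}(t,t_0)x,\mathcal{U}(t,t_0)y)$, $\mathcal{P}(t):=(\cdot,z)_t(z,z)_t^{-1}z$, $\mathcal{Q}(t):=1-\mathcal{P}(t)$. For each $t$, let $K(t,\cdot)$ be the unique continuous solution of $$K(t,s)=-(\mathcal{U}(t,s)\mathcal{Q}(t)\mathcal{L}(t)z,\mathcal{Q}(s)\mathcal{L}(s)z)_s(z,z)_s^{-1}+\int_s^tK(t,r)\,(\mathcal{U}(r,s)z,\mathcal{Q}(s)\mathcal{L}(s)z)_s(z,z)_s^{-1}\,dr,$$ and let $\eta_{ts}:=\mathcal{U}(t,s)\mathcal{Q}(t)\mathcal{L}(t)z-\int_s^tK(t,r)\,\mathcal{U}(r,s)z\,dr$. Then for all $t,s\in\mathbb{R}$,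 $(\eta_{ts},z)_s=0$ and $K(t,s)=-(\eta_{tt_0},\eta_{st_0})(z,z)_s^{-1}$.
   Context: The scalar product $(\cdot,\cdot)$ on $H$ is conjugate-linear in its second argument. Vector-valued integrals are Bochner integrals. *)

theory Defs
  imports "HOL-Analysis.Analysis"
begin

text \<open>A complex Hilbert space: a (real) Banach space carrying a complex scalar
multiplication extending the real one, and a complex inner product which is linear
in the first and conjugate-linear in the second argument and induces the norm.\<close>

class complex_hilbert = banach +
  fixes hscale :: "complex \<Rightarrow> 'a \<Rightarrow> 'a"
    and hinner :: "'a \<Rightarrow> 'a \<Rightarrow> complex"
  assumes hscale_add_right: "hscale a (x + y) = hscale a x + hscale a y"
    and hscale_add_left: "hscale (a + b) x = hscale a x + hscale b x"
    and hscale_hscale: "hscale a (hscale b x) = hscale (a * b) x"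
    and hscale_of_real: "hscale (complex_of_real r) x = r *\<^sub>R x"
    and hinner_add_left: "hinner (x + y) z = hinner x z + hinner y z"
    and hinner_scale_left: "hinner (hscale a x) y = a * hinner x y"
    and hinner_commute: "hinner y x = cnj (hinner x y)"
    and hinner_self_norm: "hinner x x = complex_of_real ((norm x)\<^sup>2)"

definition bounded_clinear_op :: "('a::complex_hilbert \<Rightarrow> 'a) \<Rightarrow> bool" where
  "bounded_clinear_op T \<longleftrightarrow> bounded_linear T \<and> (\<forall>a x. T (hscale a x) = hscale a (T x))"

definition diffq :: "(real \<Rightarrow> real \<Rightarrow> 'a::real_normed_vector \<Rightarrow> 'a) \<Rightarrow> real \<Rightarrow> 'a \<Rightarrow> real \<Rightarrow> 'a" where
  "diffq U t x h = (1 / h) *\<^sub>R (U (t + h) t x - x)"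

definition gen_dom :: "(real \<Rightarrow> real \<Rightarrow> 'a::real_normed_vector \<Rightarrow> 'a) \<Rightarrow> real \<Rightarrow> 'a set" where
  "gen_dom U t = {x. \<exists>l. (diffq U t x \<longlongrightarrow> l) (at 0)}"

definition gen :: "(real \<Rightarrow> real \<Rightarrow> 'a::real_normed_vector \<Rightarrow> 'a) \<Rightarrow> real \<Rightarrow> 'a \<Rightarrow> 'a" where
  "gen U t x = Lim (at 0) (diffq U t x)"

definition gen_dom_all :: "(real \<Rightarrow> real \<Rightarrow> 'a::real_normed_vector \<Rightarrow> 'a) \<Rightarrow> 'a set" where
  "gen_dom_all U = (\<Inter>t. gen_dom U t)"

definition oint :: "real \<Rightarrow> real \<Rightarrow> (real \<Rightarrow> 'b::real_normed_vector) \<Rightarrow> 'b" where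
  "oint a b f = (if a \<le> b then integral {a..b} f else - integral {b..a} f)"

end

(* Transport everything to time t0: with w(r) = U(r,t0) z one has w' = U(.,t0) L(.) z, and the
   noise e(t,s) = U(s,t0) \<eta>_ts satisfies d/ds e(t,s) = K(t,s) w(s), while the kernel equation
   reads K(t,s) (w s, w s) = - (e(t,s), v s), where v s is the part of w'(s) orthogonal to w(s).
   Splitting w'(s) = v s + c(s) w(s) shows that f(s) = (e(t,s), w s) solves f' = cnj c f with
   f(t) = 0, so f = 0.  Then d/ds (e(t,s), e(t',s)) = 0, i.e. this correlation does not depend on
   the base time s; at base time s, where e(s,s) = v s, the kernel equation identifies it with
   - K(t,s) (w s, w s). *)
theory Submission
  imports Defs
begin

section \<open>Complex Hilbert spaces\<close>

lemma hinner_add_right: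
  fixes x y z :: "'a::complex_hilbert"
  shows "hinner x (y + z) = hinner x y + hinner x z"
  by (simp only: hinner_commute[of x] hinner_add_left complex_cnj_add)

lemma hinner_scale_right:
  fixes x y :: "'a::complex_hilbert"
  shows "hinner x (hscale a y) = cnj a * hinner x y"
  by (simp only: hinner_commute[of x] hinner_scale_left complex_cnj_mult)

lemma hinner_scaleR_left:
  fixes x y :: "'a::complex_hilbert"
  shows "hinner (r *\<^sub>R x) y = r *\<^sub>R hinner x y"
  by (simp only: hscale_of_real[symmetric] hinner_scale_left scaleR_conv_of_real)

lemma hinner_scaleR_right:
  fixes x y :: "'a::complex_hilbert"
  shows "hinner x (r *\<^sub>R y) = r *\<^sub>R hinner x y"
  by (simp only: hinner_commute[of x] hinner_scaleR_left complex_cnj_scaleR)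

lemma hinner_diff_left:
  fixes x y z :: "'a::complex_hilbert"
  shows "hinner (x - y) z = hinner x z - hinner y z"
  using hinner_add_left[of x "- y" z] hinner_scaleR_left[of "-1" y z] by simp

lemma hscale_scaleR_left:
  fixes x :: "'a::complex_hilbert"
  shows "hscale (r *\<^sub>R a) x = r *\<^sub>R hscale a x"
  by (simp only: hscale_of_real[symmetric] hscale_hscale scaleR_conv_of_real)

lemma hscale_scaleR_right:
  fixes x :: "'a::complex_hilbert"
  shows "hscale a (r *\<^sub>R x) = r *\<^sub>R hscale a x"
  by (simp only: hscale_of_real[symmetric] hscale_hscale mult.commute)

lemma hinner_self_eq_0_iff:
  fixes x :: "'a::complex_hilbert"
  shows "hinner x x = 0 \<longleftrightarrow> x = 0"
  by (simp add: hinner_self_norm)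

lemma norm_hscale:
  fixes x :: "'a::complex_hilbert"
  shows "norm (hscale a x) = cmod a * norm x"
proof -
  have "complex_of_real ((norm (hscale a x))\<^sup>2) = (a * cnj a) * hinner x x"
    by (simp only: hinner_self_norm[symmetric] hinner_scale_left hinner_scale_right mult_ac)
  also have "\<dots> = complex_of_real ((cmod a * norm x)\<^sup>2)"
    by (simp only: complex_norm_square[symmetric] hinner_self_norm of_real_mult power_mult_distrib)
  finally show ?thesis
    by (simp only: of_real_eq_iff power2_eq_iff_nonneg norm_ge_zero zero_le_mult_iff) simp
qed

lemma cmod_hinner_le:
  fixes x y :: "'a::complex_hilbert"
  shows "cmod (hinner x y) \<le> norm x * norm y"
proof (cases "y = 0")
  case True
  then show ?thesis
    using hinner_scaleR_right[of x 0 y] by simp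
next
  case False
  define c where "c = hinner x y / hinner y y"
  define u where "u = x - hscale c y"
  have yy: "hinner y y \<noteq> 0"
    using False hinner_self_eq_0_iff by blast
  have uy: "hinner u y = 0"
    using yy by (simp add: u_def hinner_diff_left hinner_scale_left c_def)
  then have yu: "hinner y u = 0"
    using hinner_commute[of u y] by simp
  have "hinner x x = hinner u u + (c * cnj c) * hinner y y"
    unfolding u_def[THEN eq_diff_eq[THEN iffD1], symmetric]
    by (simp add: hinner_add_left hinner_add_right hinner_scale_left hinner_scale_right
        uy yu mult.assoc)
  also have "\<dots> = complex_of_real ((norm u)\<^sup>2 + (cmod c * norm y)\<^sup>2)"
    by (simp only: complex_norm_square[symmetric] hinner_self_norm of_real_mult of_real_add
        power_mult_distrib)
  finally have "(norm x)\<^sup>2 = (norm u)\<^sup>2 + (cmod c * norm y)\<^sup>2"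
    by (simp only: hinner_self_norm of_real_eq_iff)
  then have "(cmod c * norm y)\<^sup>2 \<le> (norm x)\<^sup>2"
    by simp
  then have le: "cmod c * norm y \<le> norm x"
    by (rule power2_le_imp_le) simp
  have "cmod (hinner x y) = cmod c * norm y * norm y"
    using yy by (simp add: c_def hinner_self_norm norm_divide power2_eq_square norm_mult)
  also have "\<dots> \<le> norm x * norm y"
    using le by (simp add: mult_right_mono)
  finally show ?thesis .
qed

lemma bounded_bilinear_hinner: "bounded_bilinear (hinner :: 'a::complex_hilbert \<Rightarrow> _)"
proof
  show "\<exists>K. \<forall>a b :: 'a. norm (hinner a b) \<le> norm a * norm b * K"
    using cmod_hinner_le by (metis mult.right_neutral)
qed (simp_all add: hinner_add_left hinner_add_right hinner_scaleR_left hinner_scaleR_right)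

lemma bounded_bilinear_hscale: "bounded_bilinear (hscale :: complex \<Rightarrow> 'a::complex_hilbert \<Rightarrow> _)"
proof
  show "\<exists>K. \<forall>a (b :: 'a). norm (hscale a b) \<le> norm a * norm b * K"
    using norm_hscale by (metis mult.right_neutral order_refl)
qed (simp_all add: hscale_add_left hscale_add_right hscale_scaleR_left hscale_scaleR_right)

definition orth_part :: "'a::complex_hilbert \<Rightarrow> 'a \<Rightarrow> 'a" where
  "orth_part y x = x - hscale (hinner x y / hinner y y) y"

lemma hinner_orth_part_left:
  fixes x y :: "'a::complex_hilbert"
  assumes "y \<noteq> 0"
  shows "hinner (orth_part y x) y = 0"
  using assms by (simp add: orth_part_def hinner_diff_left hinner_scale_left hinner_self_eq_0_iff)

section \<open>Oriented integrals\<close>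

lemma oint_same [simp]: "oint a a f = 0"
  by (simp add: oint_def)

lemma oint_swap: "oint b a f = - oint a b f"
  by (cases "a = b") (auto simp: oint_def)

lemma oint_eq_integral_diff:
  fixes f :: "real \<Rightarrow> 'b::banach"
  assumes f: "continuous_on UNIV f" and "c \<le> a" "c \<le> b"
  shows "oint a b f = integral {c..b} f - integral {c..a} f"
proof -
  have combine: "integral {c..x} f + integral {x..y} f = integral {c..y} f"
    if "c \<le> x" "x \<le> y" for x y
    using that
    by (intro Henstock_Kurzweil_Integration.integral_combine integrable_continuous_interval
        continuous_on_subset[OF f]) auto
  show ?thesis
  proof (cases "a \<le> b")
    case True
    then show ?thesis
      using combine[of a b] assms by (simp add: oint_def algebra_simps)
  next
    case False
    then show ?thesis
      using combine[of b a] assms by (simp add: oint_def algebra_simps)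
  qed
qed

lemma oint_has_vector_derivative_upper:
  fixes f :: "real \<Rightarrow> 'b::banach"
  assumes f: "continuous_on UNIV f"
  shows "((\<lambda>x. oint a x f) has_vector_derivative f x) (at x)"
proof -
  define c where "c = min a x - 1"
  have "((\<lambda>u. integral {c..u} f) has_vector_derivative f x) (at x within {c..x+1})"
    by (rule integral_has_vector_derivative) (auto simp: c_def intro: continuous_on_subset[OF f])
  moreover have "at x within {c..x+1} = at x"
    by (rule at_within_interior) (simp add: c_def)
  ultimately have "((\<lambda>u. integral {c..u} f) has_vector_derivative f x) (at x)"
    by simp
  then have "((\<lambda>u. integral {c..u} f - integral {c..a} f) has_vector_derivative f x) (at x)"
    by (rule has_vector_derivative_diff_const[THEN iffD2])
  then show ?thesis
    unfolding has_vector_derivative_def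
    by (rule has_derivative_transform_within_open[where s="{c<..}"])
       (auto simp: c_def intro!: oint_eq_integral_diff[OF f, symmetric])
qed

lemma oint_has_vector_derivative_lower:
  fixes f :: "real \<Rightarrow> 'b::banach"
  assumes "continuous_on UNIV f"
  shows "((\<lambda>x. oint x b f) has_vector_derivative - f x) (at x)"
  using has_vector_derivative_minus[OF oint_has_vector_derivative_upper[OF assms, of b x]]
  by (simp add: oint_swap[of _ b])

lemma oint_linear:
  fixes f :: "real \<Rightarrow> 'b::banach"
  assumes h: "bounded_linear h" and f: "continuous_on UNIV f"
  shows "h (oint a b f) = oint a b (\<lambda>x. h (f x))"
proof -
  have i: "f integrable_on {c..d}" for c d
    by (rule integrable_continuous_interval) (rule continuous_on_subset[OF f], simp)
  show ?thesis
    using integral_linear[OF i h] linear_neg[OF bounded_linear.linear[OF h]]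
    by (simp add: oint_def o_def)
qed

section \<open>Calculus on the real line\<close>

lemma difference_quotient_imp_has_vector_derivative:
  fixes f :: "real \<Rightarrow> 'a::real_normed_vector"
  assumes "((\<lambda>h. (1 / h) *\<^sub>R (f (x + h) - f x)) \<longlongrightarrow> D) (at 0)"
  shows "(f has_vector_derivative D) (at x)"
proof -
  have "((\<lambda>h. norm ((1 / h) *\<^sub>R (f (x + h) - f x) - D)) \<longlongrightarrow> 0) (at 0)"
    using assms by (intro tendsto_norm_zero LIM_zero)
  moreover have "\<forall>\<^sub>F h in at 0.
      norm ((1 / h) *\<^sub>R (f (x + h) - f x) - D) = norm (f (x + h) - f x - h *\<^sub>R D) / norm h"
  proof (rule eventually_at_filter[THEN iffD2, OF always_eventually], intro allI impI)
    fix h :: real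
    assume "h \<noteq> 0"
    then have "(1 / h) *\<^sub>R (f (x + h) - f x) - D = (1 / h) *\<^sub>R (f (x + h) - f x - h *\<^sub>R D)"
      by (simp add: scaleR_diff_right)
    then show "norm ((1 / h) *\<^sub>R (f (x + h) - f x) - D) = norm (f (x + h) - f x - h *\<^sub>R D) / norm h"
      by (simp add: divide_inverse mult.commute)
  qed
  ultimately have "((\<lambda>h. norm (f (x + h) - f x - h *\<^sub>R D) / norm h) \<longlongrightarrow> 0) (at 0)"
    by (rule Lim_transform_eventually)
  then show ?thesis
    by (simp add: has_vector_derivative_def has_derivative_at bounded_linear_scaleR_left)
qed

lemma linear_ode_vanishes:
  fixes f g :: "real \<Rightarrow> 'a::{real_normed_field,banach}"
  assumes f: "\<And>r. (f has_vector_derivative g r * f r) (at r)"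
    and g: "continuous_on UNIV g" and "f t = 0"
  shows "f q = 0"
proof -
  define G where "G = (\<lambda>x. exp (- oint t x g))"
  have G: "(G has_vector_derivative - g x * G x) (at x)" for x
    using field_vector_diff_chain_at[OF
        has_vector_derivative_minus[OF oint_has_vector_derivative_upper[OF g]] DERIV_exp]
    by (simp add: G_def o_def)
  have "((\<lambda>x. f x * G x) has_derivative (\<lambda>h. 0)) (at x within UNIV)" for x
    using has_vector_derivative_mult[OF f G] by (simp add: has_vector_derivative_def algebra_simps)
  then have "f q * G q = f t * G t"
    by (rule has_derivative_zero_unique[OF convex_UNIV]) auto
  with \<open>f t = 0\<close> show ?thesis
    by (simp add: G_def)
qed

section \<open>Evolution families\<close>

lemma tendsto_gen:
  assumes "x \<in> gen_dom U t"
  shows "(diffq U t x \<longlongrightarrow> gen U t x) (at 0)"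
  using assms tendsto_Lim[OF trivial_limit_at] by (auto simp: gen_dom_def gen_def)

locale evolution_family =
  fixes U :: "real \<Rightarrow> real \<Rightarrow> 'a::complex_hilbert \<Rightarrow> 'a"
  assumes bounded_clinear_U: "\<And>t s. bounded_clinear_op (U t s)"
    and strongly_continuous: "\<And>x. continuous_on UNIV (\<lambda>(t, s). U t s x)"
    and U_same: "\<And>t x. U t t x = x"
    and U_compose: "\<And>r s t x. U r s (U t r x) = U t s x"
begin

lemma bounded_linear_U: "bounded_linear (U t s)"
  using bounded_clinear_U by (simp add: bounded_clinear_op_def)

lemma U_hscale: "U t s (hscale c x) = hscale c (U t s x)"
  using bounded_clinear_U by (simp add: bounded_clinear_op_def)

lemma U_diff: "U t s (x - y) = U t s x - U t s y"
  by (rule linear_diff[OF bounded_linear.linear[OF bounded_linear_U]])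

lemma U_eq_0_iff: "U t s x = 0 \<longleftrightarrow> x = 0"
proof -
  have "U s t (U t s x) = x"
    by (simp add: U_compose U_same)
  then show ?thesis
    using linear_0[OF bounded_linear.linear[OF bounded_linear_U]] by metis
qed

lemma continuous_on_U_left: "continuous_on UNIV (\<lambda>r. U r s x)"
  using continuous_on_compose2[OF strongly_continuous[of x], of UNIV "\<lambda>r. (r, s)"]
  by (simp add: continuous_on_Pair)

lemma U_orth_component:
  "U t s (y - hscale (hinner (U t s y) (U t s z) / hinner (U t s z) (U t s z)) z)
     = orth_part (U t s z) (U t s y)"
  by (simp add: U_diff U_hscale orth_part_def)

lemma U_orth_component_minus_oint:
  assumes "continuous_on UNIV k"
  shows "U s t0 (U t s (y - hscale (hinner (U t t0 y) (U t t0 z) / hinner (U t t0 z) (U t t0 z)) z)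
      - oint s t (\<lambda>r. hscale (k r) (U r s z)))
    = orth_part (U t t0 z) (U t t0 y) - oint s t (\<lambda>r. hscale (k r) (U r t0 z))"
proof -
  have "U s t0 (oint s t (\<lambda>r. hscale (k r) (U r s z))) = oint s t (\<lambda>r. hscale (k r) (U r t0 z))"
    using oint_linear[OF bounded_linear_U
        bounded_bilinear.continuous_on[OF bounded_bilinear_hscale assms continuous_on_U_left]]
    by (simp add: U_hscale U_compose)
  then show ?thesis
    by (simp add: U_diff[of s t0] U_compose U_orth_component)
qed

lemma orbit_has_vector_derivative:
  assumes "x \<in> gen_dom U q"
  shows "((\<lambda>r. U r s x) has_vector_derivative U q s (gen U q x)) (at q)"
proof (rule difference_quotient_imp_has_vector_derivative)
  have "U q s (diffq U q x h) = (1 / h) *\<^sub>R (U (q + h) s x - U q s x)" for h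
    by (simp add: diffq_def U_diff U_compose
        linear_scale[OF bounded_linear.linear[OF bounded_linear_U]])
  moreover have "((\<lambda>h. U q s (diffq U q x h)) \<longlongrightarrow> U q s (gen U q x)) (at 0)"
    by (rule bounded_linear.tendsto[OF bounded_linear_U tendsto_gen[OF assms]])
  ultimately show "((\<lambda>h. (1 / h) *\<^sub>R (U (q + h) s x - U q s x)) \<longlongrightarrow> U q s (gen U q x)) (at 0)"
    by simp
qed

end

section \<open>Memory kernel and noise\<close>

locale memory_kernel =
  fixes w a :: "real \<Rightarrow> 'a::complex_hilbert" and K :: "real \<Rightarrow> real \<Rightarrow> complex"
  assumes has_vector_derivative_w: "\<And>r. (w has_vector_derivative a r) (at r)"
    and continuous_a: "continuous_on UNIV a"
    and w_nonzero: "\<And>r. w r \<noteq> 0"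
    and continuous_K: "\<And>t. continuous_on UNIV (K t)"
    and kernel_equation: "\<And>t s. K t s =
      - (hinner (orth_part (w t) (a t)) (orth_part (w s) (a s)) / hinner (w s) (w s))
      + oint s t (\<lambda>r. K t r * (hinner (w r) (orth_part (w s) (a s)) / hinner (w s) (w s)))"
begin

definition noise :: "real \<Rightarrow> real \<Rightarrow> 'a" where
  "noise t s = orth_part (w t) (a t) - oint s t (\<lambda>r. hscale (K t r) (w r))"

lemma hinner_w_self_nonzero: "hinner (w r) (w r) \<noteq> 0"
  using w_nonzero by (simp add: hinner_self_eq_0_iff)

lemma continuous_w: "continuous_on UNIV w"
  by (rule continuous_at_imp_continuous_on)
    (blast intro: has_vector_derivative_continuous has_vector_derivative_w)

lemma continuous_kernel_w: "continuous_on UNIV (\<lambda>r. hscale (K t r) (w r))"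
  by (rule bounded_bilinear.continuous_on[OF bounded_bilinear_hscale continuous_K continuous_w])

lemma noise_has_vector_derivative:
  "((\<lambda>s. noise t s) has_vector_derivative hscale (K t s) (w s)) (at s)"
  using has_vector_derivative_diff[OF has_vector_derivative_const
      oint_has_vector_derivative_lower[OF continuous_kernel_w]]
  by (simp add: noise_def)

lemma kernel_eq_hinner_noise:
  "K t s * hinner (w s) (w s) = - hinner (noise t s) (orth_part (w s) (a s))"
proof -
  let ?v = "orth_part (w s) (a s)" and ?N = "hinner (w s) (w s)"
  let ?I = "oint s t (\<lambda>r. K t r * hinner (w r) ?v)"
  have cont: "continuous_on UNIV (\<lambda>r. K t r * hinner (w r) ?v)"
    by (intro continuous_on_mult continuous_K continuous_on_const
        bounded_bilinear.continuous_on[OF bounded_bilinear_hinner continuous_w])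
  have "hinner (noise t s) ?v = hinner (orth_part (w t) (a t)) ?v - ?I"
    using oint_linear[OF bounded_bilinear.bounded_linear_left[OF bounded_bilinear_hinner]
        continuous_kernel_w, of s t]
    by (simp add: noise_def hinner_diff_left hinner_scale_left)
  moreover have "oint s t (\<lambda>r. K t r * (hinner (w r) ?v / ?N)) = ?I / ?N"
    using oint_linear[OF bounded_linear_divide[of ?N] cont, of s t] by simp
  then have "K t s = (?I - hinner (orth_part (w t) (a t)) ?v) / ?N"
    using kernel_equation[of t s] by (simp add: diff_divide_distrib)
  ultimately show ?thesis
    using hinner_w_self_nonzero[of s] by simp
qed

lemma hinner_noise_w: "hinner (noise t s) (w s) = 0"
proof -
  define g where "g r = cnj (hinner (a r) (w r) / hinner (w r) (w r))" for r
  have continuous_g: "continuous_on UNIV g"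
    unfolding g_def
    by (intro bounded_linear.continuous_on[OF bounded_linear_cnj] continuous_on_divide
        bounded_bilinear.continuous_on[OF bounded_bilinear_hinner] continuous_a continuous_w)
       (simp add: hinner_w_self_nonzero)
  have ode: "((\<lambda>r. hinner (noise t r) (w r)) has_vector_derivative
      g r * hinner (noise t r) (w r)) (at r)" for r
  proof -
    have "hinner (noise t r) (a r)
        = hinner (noise t r) (orth_part (w r) (a r)) + g r * hinner (noise t r) (w r)"
      by (simp add: orth_part_def g_def bounded_bilinear.diff_right[OF bounded_bilinear_hinner]
          hinner_scale_right)
    then have "hinner (noise t r) (a r) + hinner (hscale (K t r) (w r)) (w r)
        = g r * hinner (noise t r) (w r)"
      using kernel_eq_hinner_noise[of t r] by (simp add: hinner_scale_left)
    moreover have "((\<lambda>r. hinner (noise t r) (w r)) has_vector_derivative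
        hinner (noise t r) (a r) + hinner (hscale (K t r) (w r)) (w r)) (at r)"
      by (rule bounded_bilinear.has_vector_derivative[OF bounded_bilinear_hinner
          noise_has_vector_derivative has_vector_derivative_w])
    ultimately show ?thesis
      by simp
  qed
  have "hinner (noise t t) (w t) = 0"
    by (simp add: noise_def hinner_orth_part_left w_nonzero)
  with ode continuous_g show ?thesis
    by (rule linear_ode_vanishes)
qed

lemma hinner_noise_noise_base_independent:
  "hinner (noise t q) (noise s q) = hinner (noise t r) (noise s r)"
proof (rule has_derivative_zero_unique[where f = "\<lambda>q. hinner (noise t q) (noise s q)",
      OF convex_UNIV])
  fix q
  have "hinner (w q) (noise s q) = 0"
    using hinner_noise_w[of s q] hinner_commute[of "w q" "noise s q"] by simp
  then have "hinner (noise t q) (hscale (K s q) (w q))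
      + hinner (hscale (K t q) (w q)) (noise s q) = 0"
    using hinner_noise_w[of t q] by (simp add: hinner_scale_left hinner_scale_right)
  moreover have "((\<lambda>q. hinner (noise t q) (noise s q)) has_vector_derivative
      hinner (noise t q) (hscale (K s q) (w q)) + hinner (hscale (K t q) (w q)) (noise s q)) (at q)"
    by (rule bounded_bilinear.has_vector_derivative[OF bounded_bilinear_hinner
        noise_has_vector_derivative noise_has_vector_derivative])
  ultimately show "((\<lambda>q. hinner (noise t q) (noise s q)) has_derivative (\<lambda>h. 0))
      (at q within UNIV)"
    by (simp add: has_vector_derivative_def)
qed auto

lemma kernel_eq_noise_correlation:
  "K t s = - (hinner (noise t q) (noise s q) / hinner (w s) (w s))"
proof -
  have "noise s s = orth_part (w s) (a s)"
    by (simp add: noise_def)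
  then show ?thesis
    using kernel_eq_hinner_noise[of t s] hinner_noise_noise_base_independent[of t q s s]
      hinner_w_self_nonzero[of s]
    by (simp add: field_simps)
qed

end

theorem corollary6:
  fixes U :: "real \<Rightarrow> real \<Rightarrow> 'a::complex_hilbert \<Rightarrow> 'a"
    and t0 :: real and z :: 'a
    and K :: "real \<Rightarrow> real \<Rightarrow> complex"
  assumes bdd: "\<And>t s. bounded_clinear_op (U t s)"
    and strong_cont: "\<And>x. continuous_on UNIV (\<lambda>(t, s). U t s x)"
    and U_id: "\<And>t x. U t t x = x"
    and U_comp: "\<And>r s t x. U r s (U t r x) = U t s x"
    and z_dom: "z \<in> gen_dom_all U"
    and z_nz: "z \<noteq> 0"
    and z_cont: "continuous_on UNIV (\<lambda>t. U t t0 (gen U t z))"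
    and K_cont: "\<And>t. continuous_on UNIV (K t)"
    and K_eq: "\<And>t s.
      (let ip = (\<lambda>\<tau> x y. hinner (U \<tau> t0 x) (U \<tau> t0 y));
           Q = (\<lambda>\<tau> y. y - hscale (ip \<tau> y z / ip \<tau> z z) z)
       in K t s = - (ip s (U t s (Q t (gen U t z))) (Q s (gen U s z)) / ip s z z)
                  + oint s t (\<lambda>r. K t r * (ip s (U r s z) (Q s (gen U s z)) / ip s z z)))"
  shows "\<forall>t s.
      (let ip = (\<lambda>\<tau> x y. hinner (U \<tau> t0 x) (U \<tau> t0 y));
           Q = (\<lambda>\<tau> y. y - hscale (ip \<tau> y z / ip \<tau> z z) z);
           \<eta> = (\<lambda>t' s'. U t' s' (Q t' (gen U t' z)) - oint s' t' (\<lambda>r. hscale (K t' r) (U r s' z)))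
       in ip s (\<eta> t s) z = 0 \<and> K t s = - (hinner (\<eta> t t0) (\<eta> s t0) / ip s z z))"
proof -
  interpret evolution_family U
    using bdd strong_cont U_id U_comp by unfold_locales
  define w where "w r = U r t0 z" for r
  define a where "a r = U r t0 (gen U r z)" for r
  interpret memory_kernel w a K
  proof
    show "(w has_vector_derivative a r) (at r)" for r
      using z_dom unfolding w_def a_def gen_dom_all_def by (intro orbit_has_vector_derivative) blast
    show "continuous_on UNIV a"
      using z_cont by (simp add: a_def)
    show "w r \<noteq> 0" for r
      using z_nz by (simp add: w_def U_eq_0_iff)
    show "continuous_on UNIV (K t)" for t
      by (rule K_cont)
    show "K t s = - (hinner (orth_part (w t) (a t)) (orth_part (w s) (a s)) / hinner (w s) (w s))
      + oint s t (\<lambda>r. K t r * (hinner (w r) (orth_part (w s) (a s)) / hinner (w s) (w s)))" for t s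
      using K_eq[of t s] by (simp add: Let_def U_compose U_orth_component w_def a_def)
  qed
  have noise_transport: "U s t0 (U t s (gen U t z - hscale (hinner (U t t0 (gen U t z)) (U t t0 z)
      / hinner (U t t0 z) (U t t0 z)) z) - oint s t (\<lambda>r. hscale (K t r) (U r s z))) = noise t s"
    for t s
    using U_orth_component_minus_oint[OF K_cont] by (simp add: noise_def w_def a_def)
  show ?thesis
    unfolding Let_def noise_transport noise_transport[where s = t0, unfolded U_same]
    using hinner_noise_w kernel_eq_noise_correlation by (simp add: w_def)
qed

end
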